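(* Let $1<n\leq m$ be integers. Then (1) $d(u^{(0)},0)=\binom{\lfloor\frac{m+n}{2}\rfloor+1}{2}+\binom{\lceil\frac{m-n}{2}\rceil+1}{2}$; (2) if moreover $n<m$ and $2\nmid(m-n)$, then $d(u^{(1)},0)=\binom{\lceil\frac{m+n}{2}\rceil+1}{2}+\binom{\lfloor\frac{m-n}{2}\rfloor+1}{2}-\lceil\frac{m+1}{2}\rceil$.
   Context: Elements of $\mathbb{Z}_n$ are identified with representatives in $\{0,\dots,n-1\}$. The dYoke graph $Z_{n,m}$ has vertices $u=(u_0,\dots,u_{m+1})\in\mathbb{Z}_n\times\{-1,0,1\}^m\times\mathbb{Z}_n$ with $\sum u_i\equiv0\pmod n$; $u,v$ adjacent if there is $0\leq i\leq m$ with $u_j=v_j$ for $j\notin\{i,i+1\}$ and either ($u_i=v_i+1$, $u_{i+1}=v_{i+1}-1$) or ($u_i=v_i-1$, $u_{i+1}=v_{i+1}+1$), arithmetic in coordinates $0,m+1$ in $\mathbb{Z}_n$. $d$ is graph distance, $0$ the all-zero vertex. $u^{(0)}$ is the vertex with $u_i=1$ for $1\le i\le m$ and $u_0\equiv-\lfloor\frac{m-n}{2}\rfloor\pmod n$ ($u_{m+1}$ determined by the sum condition). For $n<m$ with $m-n$ odd, $u^{(1)}$ is the vertex with $u_{\lceil(m+1)/2\rceil}=0$, $u_i=1$ for all other $1\le i\le m$, and $u_0\equiv-\lfloor\frac{m-n}{2}\rfloor\pmod n$. *)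

theory Defs
  imports Complex_Main
begin

text \<open>Vertices of the dYoke graph Z_{n,m} are represented as integer lists
  u = [u_0, ..., u_{m+1}] of length m+2, with u_0, u_{m+1} the canonical
  representatives in {0..n-1} of elements of Z_n, u_i in {-1,0,1} for 1 <= i <= m,
  and sum u_i = 0 mod n.\<close>

definition dy_vert :: "nat \<Rightarrow> nat \<Rightarrow> int list \<Rightarrow> bool" where
  "dy_vert n m u \<longleftrightarrow> length u = m + 2
     \<and> 0 \<le> u!0 \<and> u!0 < int n \<and> 0 \<le> u!(m+1) \<and> u!(m+1) < int n
     \<and> (\<forall>i\<in>{1..m}. u!i \<in> {-1,0,1})
     \<and> sum_list u mod int n = 0"

definition dy_eqc :: "nat \<Rightarrow> nat \<Rightarrow> nat \<Rightarrow> int \<Rightarrow> int \<Rightarrow> bool" where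
  "dy_eqc n m k a b \<longleftrightarrow> (if k = 0 \<or> k = m + 1 then a mod int n = b mod int n else a = b)"

definition dy_adj :: "nat \<Rightarrow> nat \<Rightarrow> int list \<Rightarrow> int list \<Rightarrow> bool" where
  "dy_adj n m u v \<longleftrightarrow> dy_vert n m u \<and> dy_vert n m v \<and>
     (\<exists>i\<le>m. (\<forall>j<m+2. j \<noteq> i \<and> j \<noteq> i + 1 \<longrightarrow> u!j = v!j) \<and>
        ((dy_eqc n m i (u!i) (v!i + 1) \<and> dy_eqc n m (i+1) (u!(i+1)) (v!(i+1) - 1)) \<or>
         (dy_eqc n m i (u!i) (v!i - 1) \<and> dy_eqc n m (i+1) (u!(i+1)) (v!(i+1) + 1))))"

definition dy_edges :: "nat \<Rightarrow> nat \<Rightarrow> (int list \<times> int list) set" where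
  "dy_edges n m = {(u, v). dy_adj n m u v}"

definition dy_dist :: "nat \<Rightarrow> nat \<Rightarrow> int list \<Rightarrow> int list \<Rightarrow> nat" where
  "dy_dist n m u v = (LEAST k. (u, v) \<in> dy_edges n m ^^ k)"

definition dy_zero :: "nat \<Rightarrow> int list" where
  "dy_zero m = replicate (m + 2) 0"

definition dy_u0 :: "nat \<Rightarrow> nat \<Rightarrow> int list" where
  "dy_u0 n m = (let a = (- \<lfloor>(real m - real n) / 2\<rfloor>) mod int n
     in [a] @ replicate m 1 @ [(- (a + int m)) mod int n])"

definition dy_u1 :: "nat \<Rightarrow> nat \<Rightarrow> int list" where
  "dy_u1 n m = (let a = (- \<lfloor>(real m - real n) / 2\<rfloor>) mod int n;
                    c = nat \<lceil>(real m + 1) / 2\<rceil>;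
                    mid = map (\<lambda>i. if i = c then 0 else 1) [1..<m+1]
     in [a] @ mid @ [(- (a + sum_list mid)) mod int n])"

end

theory Submission
  imports Defs
begin

text \<open>Lift u_0 to an integer t and consider the heights t + u_1 + ... + u_j for 0 \<le> j \<le> m.
  Along an edge exactly one height changes, by \<plusminus>1 (if the edge touches coordinate 0, after
  moving the lift by \<plusminus>1 as well). Hence d(u, 0) is at least the minimum over all lifts of the
  sum of the absolute heights. Conversely, lowering a height of maximal absolute value is always
  a legal move, so this minimum is the distance. For u^(0) the heights are t, t+1, ..., t+m,
  whose absolute sum is a convex function of t, symmetric about -m/2; over the residue class of
  the lift it is minimised at t = -\<lfloor>(m+n)/2\<rfloor>. For u^(1) one height is repeated,
  which contributes one extra term minimised at the same lift.\<close>

definition prefix_sum :: "int list \<Rightarrow> nat \<Rightarrow> int" where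
  "prefix_sum u j = (\<Sum>l=1..j. u!l)"

definition dy_potential :: "nat \<Rightarrow> int list \<Rightarrow> int \<Rightarrow> int" where
  "dy_potential m u t = (\<Sum>j\<le>m. \<bar>t + prefix_sum u j\<bar>)"

lemma prefix_sum_0 [simp]: "prefix_sum u 0 = 0"
  by (simp add: prefix_sum_def)

lemma prefix_sum_Suc: "prefix_sum u (Suc j) = prefix_sum u j + u!Suc j"
  by (simp add: prefix_sum_def)

lemma dy_potential_nonneg: "0 \<le> dy_potential m u t"
  unfolding dy_potential_def by (simp add: sum_nonneg)

definition dy_move :: "nat \<Rightarrow> nat \<Rightarrow> nat \<Rightarrow> int \<Rightarrow> int list \<Rightarrow> int list \<Rightarrow> bool" where
  "dy_move n m i \<sigma> u w \<longleftrightarrow> i \<le> m \<and> (\<forall>j<m+2. j \<noteq> i \<and> j \<noteq> i + 1 \<longrightarrow> u!j = w!j)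
     \<and> dy_eqc n m i (u!i) (w!i + \<sigma>) \<and> dy_eqc n m (i+1) (u!(i+1)) (w!(i+1) - \<sigma>)"

lemma dy_adj_iff_move:
  "dy_adj n m u w \<longleftrightarrow>
     dy_vert n m u \<and> dy_vert n m w \<and> (\<exists>i. \<exists>\<sigma>\<in>{1,-1}. dy_move n m i \<sigma> u w)"
proof -
  have "(\<exists>\<sigma>\<in>{1,-1}. dy_move n m i \<sigma> u w) \<longleftrightarrow>
      i \<le> m \<and> (\<forall>j<m+2. j \<noteq> i \<and> j \<noteq> i + 1 \<longrightarrow> u!j = w!j) \<and>
        ((dy_eqc n m i (u!i) (w!i + 1) \<and> dy_eqc n m (i+1) (u!(i+1)) (w!(i+1) - 1)) \<or>
         (dy_eqc n m i (u!i) (w!i - 1) \<and> dy_eqc n m (i+1) (u!(i+1)) (w!(i+1) + 1)))" for i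
    unfolding dy_move_def by simp
  then show ?thesis
    unfolding dy_adj_def by (simp only:)
qed

lemma dy_move_nth_0:
  assumes "dy_move n m i \<sigma> u w"
  shows "u!0 mod int n = (w!0 + (if i = 0 then \<sigma> else 0)) mod int n"
proof -
  have "\<forall>j<m+2. j \<noteq> i \<and> j \<noteq> i + 1 \<longrightarrow> u!j = w!j" "dy_eqc n m i (u!i) (w!i + \<sigma>)"
    using assms by (simp_all add: dy_move_def)
  then show ?thesis
    by (cases "i = 0") (simp_all add: dy_eqc_def)
qed

lemma dy_move_nth:
  assumes "dy_move n m i \<sigma> u w" "1 \<le> l" "l \<le> m"
  shows "u!l = w!l + (if l = i then \<sigma> else 0) - (if l = i + 1 then \<sigma> else 0)"
proof -
  have other: "\<forall>j<m+2. j \<noteq> i \<and> j \<noteq> i + 1 \<longrightarrow> u!j = w!j"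
    and at_i: "dy_eqc n m i (u!i) (w!i + \<sigma>)" and at_Suc_i: "dy_eqc n m (i+1) (u!(i+1)) (w!(i+1) - \<sigma>)"
    using assms(1) by (simp_all add: dy_move_def)
  consider "l = i" | "l = i + 1" | "l \<noteq> i" "l \<noteq> i + 1" by blast
  then show ?thesis
  proof cases
    case 1
    then show ?thesis using at_i assms(2,3) by (simp add: dy_eqc_def)
  next
    case 2
    then show ?thesis using at_Suc_i assms(3) by (simp add: dy_eqc_def)
  next
    case 3
    then show ?thesis using other assms(3) by simp
  qed
qed

lemma dy_move_prefix_sum:
  assumes "dy_move n m i \<sigma> u w" "j \<le> m"
  shows "prefix_sum u j + (if i = 0 then \<sigma> else 0) = prefix_sum w j + (if j = i then \<sigma> else 0)"
  using assms(2)
proof (induction j)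
  case (Suc j)
  then show ?case
    using dy_move_nth[OF assms(1), of "Suc j"] by (simp add: prefix_sum_Suc)
qed simp

lemma dy_adj_potential_le:
  assumes "dy_adj n m u w" "t mod int n = w!0 mod int n"
  obtains t' where "t' mod int n = u!0 mod int n" "dy_potential m u t' \<le> dy_potential m w t + 1"
proof -
  obtain i \<sigma> where move: "dy_move n m i \<sigma> u w" and \<sigma>: "\<sigma> \<in> {1,-1}"
    using assms(1) by (auto simp: dy_adj_iff_move)
  then have i: "i \<le> m" by (simp add: dy_move_def)
  define t' where "t' = t + (if i = 0 then \<sigma> else 0)"
  have "t' mod int n = u!0 mod int n"
    using dy_move_nth_0[OF move] assms(2) unfolding t'_def by (metis mod_add_left_eq)
  moreover have "dy_potential m u t' \<le> dy_potential m w t + 1"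
  proof -
    have "\<bar>t' + prefix_sum u j\<bar> \<le> \<bar>t + prefix_sum w j\<bar> + (if j = i then 1 else 0)" if "j \<le> m" for j
      using dy_move_prefix_sum[OF move that] \<sigma> unfolding t'_def by auto
    then have "dy_potential m u t' \<le> (\<Sum>j\<le>m. \<bar>t + prefix_sum w j\<bar> + (if j = i then 1 else 0))"
      unfolding dy_potential_def by (intro sum_mono) simp
    also have "\<dots> = dy_potential m w t + 1"
      using i by (simp add: dy_potential_def sum.distrib)
    finally show ?thesis .
  qed
  ultimately show thesis by (rule that)
qed

lemma dy_potential_le_walk:
  assumes "(u, dy_zero m) \<in> dy_edges n m ^^ k"
  shows "\<exists>t. t mod int n = u!0 mod int n \<and> dy_potential m u t \<le> int k"
  using assms
proof (induction k arbitrary: u)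
  case 0
  then have u: "u = dy_zero m" by simp
  then have "dy_potential m u 0 = 0"
    by (simp add: dy_potential_def prefix_sum_def dy_zero_def del: replicate.simps)
  with u show ?case by (intro exI[of _ 0]) (simp add: dy_zero_def)
next
  case (Suc k)
  then obtain w where "(u, w) \<in> dy_edges n m" and w: "(w, dy_zero m) \<in> dy_edges n m ^^ k"
    by (meson relpow_Suc_D2)
  then have adj: "dy_adj n m u w"
    by (simp add: dy_edges_def)
  obtain t where t: "t mod int n = w!0 mod int n" "dy_potential m w t \<le> int k"
    using Suc.IH[OF w] by blast
  obtain t' where "t' mod int n = u!0 mod int n" "dy_potential m u t' \<le> dy_potential m w t + 1"
    using dy_adj_potential_le[OF adj t(1)] .
  with t(2) show ?case by auto
qed

lemma sum_list_list_update:
  fixes xs :: "'a::ab_group_add list"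
  shows "k < length xs \<Longrightarrow> sum_list (xs[k := x]) = sum_list xs + x - xs!k"
  by (induction xs arbitrary: k) (auto split: nat.split)

lemma dy_potential_eq_0:
  assumes v: "dy_vert n m u" and t: "t mod int n = u!0 mod int n" and P: "dy_potential m u t = 0"
  shows "u = dy_zero m"
proof -
  have len: "length u = m + 2" and r0: "0 \<le> u!0" "u!0 < int n"
    and r1: "0 \<le> u!(m+1)" "u!(m+1) < int n" and s: "sum_list u mod int n = 0"
    using v unfolding dy_vert_def by auto
  have height: "t + prefix_sum u j = 0" if "j \<le> m" for j
    using P that unfolding dy_potential_def by (subst (asm) sum_nonneg_eq_0_iff) auto
  have t0: "t = 0"
    using height[of 0] by simp
  have mid: "u!l = 0" if l: "1 \<le> l" "l \<le> m" for l
  proof -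
    obtain k where "l = Suc k"
      using l(1) by (cases l) auto
    then show ?thesis
      using l height[of k] height[of l] by (simp add: prefix_sum_Suc)
  qed
  have first: "u!0 = 0"
    using t r0 unfolding t0 by (simp add: mod_pos_pos_trivial)
  have "sum_list u = (\<Sum>i<m+1. u!i) + u!(m+1)"
    using len by (simp add: sum_list_sum_nth atLeast0LessThan)
  also have "(\<Sum>i<m+1. u!i) = 0"
  proof (intro sum.neutral ballI)
    fix i assume "i \<in> {..<m+1}"
    then show "u!i = 0"
      using mid first by (cases "i = 0") auto
  qed
  finally have last: "u!(m+1) = 0"
    using s r1 by (simp add: mod_pos_pos_trivial)
  show ?thesis
  proof (rule nth_equalityI)
    show "length u = length (dy_zero m)"
      using len by (simp add: dy_zero_def)
    fix i assume i: "i < length u"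
    then have "u!i = 0"
      using first mid last len by (cases "i = 0"; cases "i = m + 1") auto
    then show "u!i = dy_zero m ! i"
      using i len by (simp add: dy_zero_def del: replicate.simps)
  qed
qed

lemma sum_list_update_pair_mod:
  fixes u :: "int list"
  assumes "i + 1 < length u" "a mod k = (u!i - d) mod k" "b mod k = (u!(i+1) + d) mod k"
  shows "sum_list (u[i := a, i+1 := b]) mod k = sum_list u mod k"
proof -
  have "sum_list (u[i := a, i+1 := b]) - sum_list u = (a - (u!i - d)) + (b - (u!(i+1) + d))"
    using assms(1) by (simp add: sum_list_list_update)
  moreover have "k dvd a - (u!i - d)" "k dvd b - (u!(i+1) + d)"
    using assms(2,3) by (simp_all add: mod_eq_dvd_iff)
  ultimately have "k dvd sum_list (u[i := a, i+1 := b]) - sum_list u"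
    by (metis dvd_add)
  then show ?thesis
    by (simp add: mod_eq_dvd_iff)
qed

lemma dy_move_exists:
  assumes v: "dy_vert n m u" and i: "i \<le> m" and \<sigma>: "\<sigma> \<in> {1,-1}"
    and left: "1 \<le> i \<Longrightarrow> u!i - \<sigma> \<in> {-1,0,1}"
    and right: "i + 1 \<le> m \<Longrightarrow> u!(i+1) + \<sigma> \<in> {-1,0,1}"
  obtains w where "dy_vert n m w" "dy_move n m i \<sigma> u w"
proof -
  have len: "length u = m + 2" and r0: "0 \<le> u!0" "u!0 < int n"
    and r1: "0 \<le> u!(m+1)" "u!(m+1) < int n" and s: "sum_list u mod int n = 0"
    and mid: "\<forall>l\<in>{1..m}. u!l \<in> {-1,0,1}"
    using v unfolding dy_vert_def by auto
  have n: "0 < n" using r0 by simp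
  define a where "a = (if i = 0 then (u!i - \<sigma>) mod int n else u!i - \<sigma>)"
  define b where "b = (if i = m then (u!(i+1) + \<sigma>) mod int n else u!(i+1) + \<sigma>)"
  define w where "w = u[i := a, i+1 := b]"
  have w_i: "w!i = a" and w_Suc_i: "w!(i+1) = b" and w_other: "\<And>j. j \<noteq> i \<Longrightarrow> j \<noteq> i + 1 \<Longrightarrow> w!j = u!j"
    unfolding w_def using len i by auto
  have a_mod: "a mod int n = (u!i - \<sigma>) mod int n" and b_mod: "b mod int n = (u!(i+1) + \<sigma>) mod int n"
    unfolding a_def b_def by simp_all
  have sum_w: "sum_list w mod int n = 0"
    using sum_list_update_pair_mod[OF _ a_mod b_mod] len i s unfolding w_def by simp
  have w_vert: "dy_vert n m w"
    unfolding dy_vert_def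
  proof (intro conjI ballI)
    show "length w = m + 2" using len by (simp add: w_def)
    show "0 \<le> w!0" "w!0 < int n"
      using r0 n w_i w_other[of 0] by (cases "i = 0"; simp add: a_def)+
    show "0 \<le> w!(m+1)" "w!(m+1) < int n"
      using r1 n i w_Suc_i w_other[of "m+1"] by (cases "i = m"; simp add: b_def)+
    show "w!l \<in> {-1,0,1}" if l: "l \<in> {1..m}" for l
      using l left right mid w_i w_Suc_i w_other[of l]
      by (cases "l = i"; cases "l = i + 1") (simp_all add: a_def b_def)
    show "sum_list w mod int n = 0" by (rule sum_w)
  qed
  have "dy_eqc n m i (u!i) (w!i + \<sigma>)"
    using i w_i by (cases "i = 0") (simp_all add: dy_eqc_def a_def mod_add_left_eq)
  moreover have "dy_eqc n m (i+1) (u!(i+1)) (w!(i+1) - \<sigma>)"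
    using w_Suc_i by (cases "i = m") (simp_all add: dy_eqc_def b_def mod_diff_left_eq)
  ultimately have "dy_move n m i \<sigma> u w"
    using i w_other by (simp add: dy_move_def)
  with w_vert show thesis by (rule that)
qed

lemma ex_arg_max_atMost:
  fixes f :: "nat \<Rightarrow> 'a::linorder"
  obtains i where "i \<le> m" "\<And>j. j \<le> m \<Longrightarrow> f j \<le> f i"
proof -
  have "Max (f ` {..m}) \<in> f ` {..m}"
    by (rule Max_in) auto
  then obtain i where i: "Max (f ` {..m}) = f i" "i \<in> {..m}"
    by (rule imageE)
  have "f j \<le> f i" if "j \<le> m" for j
    unfolding i(1)[symmetric] using that by (intro Max_ge) auto
  with i(2) show thesis
    by (intro that) auto
qed

text \<open>Lowering a height of maximal absolute value is a legal move: the neighbouring heights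
  are not larger in that direction, so the coordinates stay in {-1,0,1}.\<close>
lemma dy_move_lowering_max:
  assumes v: "dy_vert n m u" and i: "i \<le> m" and fi: "t + prefix_sum u i \<noteq> 0"
    and max: "\<And>j. j \<le> m \<Longrightarrow> \<bar>t + prefix_sum u j\<bar> \<le> \<bar>t + prefix_sum u i\<bar>"
  obtains w where "dy_vert n m w" "dy_move n m i (sgn (t + prefix_sum u i)) u w"
proof -
  define f where "f j = t + prefix_sum u j" for j
  define \<sigma> :: int where "\<sigma> = sgn (f i)"
  have \<sigma>: "\<sigma> \<in> {1,-1}"
    using fi by (simp add: \<sigma>_def f_def sgn_if)
  have \<sigma>_max: "\<sigma> * f j \<le> \<sigma> * f i" if "j \<le> m" for j
  proof -
    have "\<sigma> * f j \<le> \<bar>f j\<bar>"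
      using \<sigma> by auto
    also have "\<dots> \<le> \<bar>f i\<bar>"
      using max[OF that] unfolding f_def .
    finally show ?thesis
      by (simp add: \<sigma>_def abs_sgn mult.commute)
  qed
  have coord: "u!l \<in> {-1,0,1}" if "1 \<le> l" "l \<le> m" for l
    using v that by (simp add: dy_vert_def)
  have step: "u!Suc j = f (Suc j) - f j" for j
    unfolding f_def by (simp add: prefix_sum_Suc)
  have left: "u!i - \<sigma> \<in> {-1,0,1}" if i1: "1 \<le> i"
  proof -
    obtain k where k: "i = Suc k"
      using i1 by (cases i) auto
    have "0 \<le> \<sigma> * u!i"
      using step[of k] \<sigma>_max[of k] i unfolding k by (simp add: right_diff_distrib)
    then show ?thesis
      using coord[OF i1 i] \<sigma> by auto
  qed
  have right: "u!(i+1) + \<sigma> \<in> {-1,0,1}" if "i + 1 \<le> m"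
  proof -
    have "\<sigma> * u!(i+1) \<le> 0"
      using step[of i] \<sigma>_max[OF that] by (simp add: right_diff_distrib)
    then show ?thesis
      using coord[of "i + 1"] that \<sigma> by auto
  qed
  show thesis
    using dy_move_exists[OF v i \<sigma> left right] that unfolding \<sigma>_def f_def by blast
qed

lemma abs_minus_sgn: "(x::int) \<noteq> 0 \<Longrightarrow> \<bar>x - sgn x\<bar> = \<bar>x\<bar> - 1"
  by (simp add: sgn_if abs_if)

lemma dy_potential_step_down:
  assumes v: "dy_vert n m u" and t: "t mod int n = u!0 mod int n" and P: "0 < dy_potential m u t"
  obtains w t' where "dy_adj n m u w" "t' mod int n = w!0 mod int n"
    "dy_potential m w t' = dy_potential m u t - 1"
proof -
  define f where "f j = t + prefix_sum u j" for j
  obtain i where i: "i \<le> m" and max: "\<And>j. j \<le> m \<Longrightarrow> \<bar>f j\<bar> \<le> \<bar>f i\<bar>"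
    using ex_arg_max_atMost[where f = "\<lambda>j. \<bar>f j\<bar>" and m = m] by blast
  have fi: "f i \<noteq> 0"
  proof
    assume "f i = 0"
    then have "\<bar>t + prefix_sum u j\<bar> = 0" if "j \<le> m" for j
      using max[OF that] unfolding f_def by simp
    then have "dy_potential m u t = 0"
      unfolding dy_potential_def by (intro sum.neutral) simp
    with P show False by simp
  qed
  define \<sigma> :: int where "\<sigma> = sgn (f i)"
  have \<sigma>: "\<sigma> \<in> {1,-1}"
    using fi by (simp add: \<sigma>_def sgn_if)
  obtain w where "dy_vert n m w" and move: "dy_move n m i \<sigma> u w"
    using dy_move_lowering_max[OF v i] fi max unfolding \<sigma>_def f_def by blast
  then have adj: "dy_adj n m u w"
    using v \<sigma> by (auto simp: dy_adj_iff_move)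
  define \<delta> where "\<delta> = (if i = 0 then \<sigma> else 0)"
  have "(t - \<delta>) mod int n = (u!0 - \<delta>) mod int n"
    using t by (rule mod_diff_cong) simp
  also have "\<dots> = (w!0 + \<delta> - \<delta>) mod int n"
    using dy_move_nth_0[OF move] unfolding \<delta>_def[symmetric] by (rule mod_diff_cong) simp
  finally have t': "(t - \<delta>) mod int n = w!0 mod int n"
    by simp
  have heights: "t - \<delta> + prefix_sum w j = f j - (if j = i then \<sigma> else 0)" if "j \<le> m" for j
    using dy_move_prefix_sum[OF move that] unfolding f_def \<delta>_def by simp
  have "dy_potential m w (t - \<delta>) = (\<Sum>j\<le>m. \<bar>f j\<bar> - (if j = i then 1 else 0))"
    unfolding dy_potential_def
  proof (intro sum.cong refl)
    fix j assume "j \<in> {..m}"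
    then show "\<bar>t - \<delta> + prefix_sum w j\<bar> = \<bar>f j\<bar> - (if j = i then 1 else 0)"
      using heights[of j] abs_minus_sgn[OF fi] unfolding \<sigma>_def by simp
  qed
  also have "\<dots> = dy_potential m u t - 1"
    using i by (simp add: dy_potential_def f_def sum_subtractf)
  finally show thesis
    using adj t' by (intro that)
qed

lemma dy_walk_to_zero:
  assumes "dy_vert n m u" "t mod int n = u!0 mod int n"
  shows "(u, dy_zero m) \<in> dy_edges n m ^^ nat (dy_potential m u t)"
  using assms
proof (induction "nat (dy_potential m u t)" arbitrary: u t)
  case 0
  then have "dy_potential m u t = 0"
    using dy_potential_nonneg[of m u t] by linarith
  then show ?case
    using dy_potential_eq_0[OF 0(2,3)] 0(1) by simp
next
  case (Suc k)
  then have "0 < dy_potential m u t"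
    by linarith
  then obtain w t' where adj: "dy_adj n m u w" and t': "t' mod int n = w!0 mod int n"
    and P: "dy_potential m w t' = dy_potential m u t - 1"
    using dy_potential_step_down[OF Suc.prems] by blast
  have w: "dy_vert n m w"
    using adj by (simp add: dy_adj_def)
  have k: "k = nat (dy_potential m w t')"
    using Suc.hyps(2) unfolding P by linarith
  have "(w, dy_zero m) \<in> dy_edges n m ^^ k"
    using Suc.hyps(1)[OF k w t'] k by simp
  moreover have "(u, w) \<in> dy_edges n m"
    using adj by (simp add: dy_edges_def)
  ultimately show ?case
    using Suc.hyps(2) by (metis relpow_Suc_I2)
qed

lemma dy_dist_eq_potential:
  assumes v: "dy_vert n m u" and t0: "t0 mod int n = u!0 mod int n"
    and min: "\<And>t. t mod int n = u!0 mod int n \<Longrightarrow> dy_potential m u t0 \<le> dy_potential m u t"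
  shows "int (dy_dist n m u (dy_zero m)) = dy_potential m u t0"
proof -
  let ?k = "nat (dy_potential m u t0)"
  have walk: "(u, dy_zero m) \<in> dy_edges n m ^^ ?k"
    using dy_walk_to_zero[OF v t0] .
  then have "dy_dist n m u (dy_zero m) \<le> ?k"
    unfolding dy_dist_def by (rule Least_le)
  moreover have "(u, dy_zero m) \<in> dy_edges n m ^^ dy_dist n m u (dy_zero m)"
    unfolding dy_dist_def using walk by (rule LeastI)
  then obtain t where "t mod int n = u!0 mod int n"
    "dy_potential m u t \<le> int (dy_dist n m u (dy_zero m))"
    using dy_potential_le_walk by blast
  with min have "dy_potential m u t0 \<le> int (dy_dist n m u (dy_zero m))"
    by force
  ultimately show ?thesis
    using dy_potential_nonneg[of m u t0] by linarith
qed

definition abs_shift_sum :: "nat \<Rightarrow> int \<Rightarrow> int" where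
  "abs_shift_sum m t = (\<Sum>j\<le>m. \<bar>t + int j\<bar>)"

lemma abs_shift_sum_Suc: "abs_shift_sum (Suc m) t = abs_shift_sum m t + \<bar>t + int m + 1\<bar>"
  by (simp add: abs_shift_sum_def add.assoc)

lemma abs_shift_sum_Suc_shift: "abs_shift_sum (Suc m) t = \<bar>t\<bar> + abs_shift_sum m (t + 1)"
  unfolding abs_shift_sum_def by (subst sum.atMost_Suc_shift) (simp add: ac_simps)

lemma abs_shift_sum_reflect: "abs_shift_sum m (- int m - t) = abs_shift_sum m t"
proof -
  have "abs_shift_sum m t = (\<Sum>j=0..m. \<bar>t + int (m + 0 - j)\<bar>)"
    unfolding abs_shift_sum_def atMost_atLeast0 by (rule sum.atLeastAtMost_rev)
  also have "\<dots> = abs_shift_sum m (- int m - t)"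
    unfolding abs_shift_sum_def atMost_atLeast0
  proof (intro sum.cong refl)
    fix j assume "j \<in> {0..m}"
    then have "t + int (m + 0 - j) = - (- int m - t + int j)"
      by (simp add: of_nat_diff)
    then show "\<bar>t + int (m + 0 - j)\<bar> = \<bar>- int m - t + int j\<bar>"
      by (simp only: abs_minus_cancel)
  qed
  finally show ?thesis ..
qed

lemma abs_shift_sum_mono_right:
  assumes "0 \<le> 2 * a + int m" "a \<le> b"
  shows "abs_shift_sum m a \<le> abs_shift_sum m b"
  using assms(2)
proof (induction b rule: int_ge_induct)
  case (step b)
  have "abs_shift_sum m (b + 1) = abs_shift_sum m b + \<bar>b + int m + 1\<bar> - \<bar>b\<bar>"
    using abs_shift_sum_Suc[of m b] abs_shift_sum_Suc_shift[of m b] by simp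
  moreover have "\<bar>b\<bar> \<le> \<bar>b + int m + 1\<bar>"
    using assms(1) step.hyps by linarith
  ultimately show ?case
    using step.IH by linarith
qed simp

text \<open>The sum depends on t only through the distance of t from the centre -m/2.\<close>
lemma abs_shift_sum_mono:
  assumes "\<bar>2 * a + int m\<bar> \<le> \<bar>2 * b + int m\<bar>"
  shows "abs_shift_sum m a \<le> abs_shift_sum m b"
proof -
  define a' where "a' = (if 0 \<le> 2 * a + int m then a else - int m - a)"
  define b' where "b' = (if 0 \<le> 2 * b + int m then b else - int m - b)"
  have "abs_shift_sum m a = abs_shift_sum m a'" "abs_shift_sum m b = abs_shift_sum m b'"
    unfolding a'_def b'_def by (simp_all add: abs_shift_sum_reflect)
  moreover have "abs_shift_sum m a' \<le> abs_shift_sum m b'"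
    using assms by (intro abs_shift_sum_mono_right) (auto simp: a'_def b'_def)
  ultimately show ?thesis by simp
qed

lemma abs_le_abs_of_cong:
  fixes t t0 c :: int
  assumes "t mod int n = t0 mod int n" "\<bar>2 * t0 + c\<bar> \<le> int n"
  shows "\<bar>2 * t0 + c\<bar> \<le> \<bar>2 * t + c\<bar>"
proof -
  have "int n dvd t - t0"
    using assms(1) by (simp add: mod_eq_dvd_iff)
  then obtain q where "t - t0 = int n * q"
    by (rule dvdE)
  then have q: "t = t0 + int n * q"
    by simp
  show ?thesis
  proof (cases "q = 0")
    case False
    then have "int n * 1 \<le> int n * \<bar>q\<bar>"
      by (intro mult_left_mono) auto
    then have "int n \<le> \<bar>int n * q\<bar>"
      by (simp add: abs_mult)
    then show ?thesis
      using assms(2) q by linarith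
  qed (simp add: q)
qed

lemma abs_shift_sum_min_cong:
  assumes "t mod int n = t0 mod int n" "\<bar>2 * t0 + int m\<bar> \<le> int n"
  shows "abs_shift_sum m t0 \<le> abs_shift_sum m t"
  using abs_le_abs_of_cong[OF assms] by (rule abs_shift_sum_mono)

lemma abs_shift_sum_repeat:
  assumes "c \<le> k"
  shows "(\<Sum>j\<le>Suc k. \<bar>t + int j - (if c < j then 1 else 0)\<bar>) = abs_shift_sum k t + \<bar>t + int c\<bar>"
  using assms
proof (induction k rule: nat_induct_at_least)
  case base
  have "(\<Sum>j\<le>c. \<bar>t + int j - (if c < j then 1 else 0)\<bar>) = abs_shift_sum c t"
    unfolding abs_shift_sum_def by (intro sum.cong) auto
  then show ?case by simp
next
  case (Suc k)
  then show ?case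
    using abs_shift_sum_Suc[of k t] by simp
qed

lemma abs_shift_sum_eq_choose:
  "a \<le> m \<Longrightarrow> abs_shift_sum m (- int a) = int (((a + 1) choose 2) + ((m - a + 1) choose 2))"
proof (induction m arbitrary: a)
  case 0
  then show ?case by (simp add: abs_shift_sum_def)
next
  case (Suc m)
  show ?case
  proof (cases a)
    case 0
    then show ?thesis
      using Suc.IH[of 0] abs_shift_sum_Suc[of m 0] by (simp add: numeral_2_eq_2)
  next
    case (Suc a')
    then show ?thesis
      using Suc.IH[of a'] Suc.prems abs_shift_sum_Suc_shift[of m "- int a"] by (simp add: numeral_2_eq_2)
  qed
qed

lemma floor_half_of_nat: "\<lfloor>real k / 2\<rfloor> = int (k div 2)"
  using floor_divide_of_nat_eq[of k 2] by simp

lemma ceiling_half_of_nat: "\<lceil>real k / 2\<rceil> = int ((k + 1) div 2)"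
proof (rule ceiling_unique)
  show "real_of_int (int ((k + 1) div 2)) - 1 < real k / 2"
    by (cases "even k") (auto elim!: evenE oddE)
  show "real k / 2 \<le> real_of_int (int ((k + 1) div 2))"
    by (cases "even k") (auto elim!: evenE oddE)
qed

lemma floor_half_of_nat_diff: "n \<le> m \<Longrightarrow> \<lfloor>(real m - real n) / 2\<rfloor> = int ((m - n) div 2)"
  using floor_half_of_nat[of "m - n"] by (simp add: of_nat_diff)

lemma ceiling_half_of_nat_diff: "n \<le> m \<Longrightarrow> \<lceil>(real m - real n) / 2\<rceil> = int ((m - n + 1) div 2)"
  using ceiling_half_of_nat[of "m - n"] by (simp add: of_nat_diff)

lemma add_minus_mod_eq_0: "(a + (x + (- a - x) mod k)) mod k = 0" for a x k :: int
proof -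
  have "(a + x + (- a - x) mod k) mod k = (a + x + (- a - x)) mod k"
    by (rule mod_add_right_eq)
  then show ?thesis
    by (simp add: add.assoc)
qed

lemma dy_u0_nth: "1 \<le> l \<Longrightarrow> l \<le> m \<Longrightarrow> dy_u0 n m ! l = 1"
  unfolding dy_u0_def Let_def by (cases l) (auto simp: nth_append)

lemma dy_u0_nth_0: "n \<le> m \<Longrightarrow> dy_u0 n m ! 0 = (- int ((m - n) div 2)) mod int n"
  unfolding dy_u0_def Let_def by (simp add: floor_half_of_nat_diff)

lemma dy_vert_u0: "0 < n \<Longrightarrow> dy_vert n m (dy_u0 n m)"
  unfolding dy_vert_def dy_u0_def Let_def
  by (auto simp: nth_append sum_list_replicate add_minus_mod_eq_0)

lemma dy_potential_u0: "dy_potential m (dy_u0 n m) t = abs_shift_sum m t"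
proof -
  have "prefix_sum (dy_u0 n m) j = (\<Sum>l=1..j. 1)" if "j \<le> m" for j
    unfolding prefix_sum_def by (rule sum.cong) (use that dy_u0_nth in auto)
  then show ?thesis
    unfolding dy_potential_def abs_shift_sum_def by simp
qed

lemma dy_u1_centre: "nat \<lceil>(real m + 1) / 2\<rceil> = m div 2 + 1"
  using ceiling_half_of_nat[of "m + 1"] by (simp add: add.commute)

lemma dy_u1_nth:
  assumes "1 \<le> l" "l \<le> m"
  shows "dy_u1 n m ! l = (if l = m div 2 + 1 then 0 else 1)"
proof -
  obtain k where k: "l = Suc k"
    using assms(1) by (cases l) auto
  have "dy_u1 n m ! l = (if [1..<m+1] ! k = m div 2 + 1 then 0 else 1)"
    using assms unfolding dy_u1_def Let_def dy_u1_centre k by (simp add: nth_append del: upt_Suc)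
  also have "[1..<m+1] ! k = l"
    using assms k by (simp del: upt_Suc)
  finally show ?thesis .
qed

lemma dy_u1_nth_0: "n \<le> m \<Longrightarrow> dy_u1 n m ! 0 = (- int ((m - n) div 2)) mod int n"
  unfolding dy_u1_def Let_def by (simp add: floor_half_of_nat_diff)

lemma dy_vert_u1: "0 < n \<Longrightarrow> dy_vert n m (dy_u1 n m)"
  unfolding dy_vert_def dy_u1_def Let_def
  by (auto simp: nth_append add_minus_mod_eq_0)

lemma dy_potential_u1:
  assumes "1 \<le> m"
  shows "dy_potential m (dy_u1 n m) t = abs_shift_sum (m - 1) t + \<bar>t + int (m div 2)\<bar>"
proof -
  have "prefix_sum (dy_u1 n m) j = int j - (if m div 2 < j then 1 else 0)" if "j \<le> m" for j
  proof -
    have "prefix_sum (dy_u1 n m) j = (\<Sum>l=1..j. 1 - (if l = m div 2 + 1 then 1 else 0))"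
      unfolding prefix_sum_def using that by (intro sum.cong) (auto simp: dy_u1_nth)
    then show ?thesis
      by (simp add: sum_subtractf)
  qed
  then have "dy_potential m (dy_u1 n m) t = (\<Sum>j\<le>Suc (m - 1). \<bar>t + int j - (if m div 2 < j then 1 else 0)\<bar>)"
    unfolding dy_potential_def using assms by (intro sum.cong) auto
  also have "\<dots> = abs_shift_sum (m - 1) t + \<bar>t + int (m div 2)\<bar>"
    using assms by (intro abs_shift_sum_repeat) linarith
  finally show ?thesis .
qed

lemma dy_dist_u0:
  assumes "1 < n" "n \<le> m"
  shows "dy_dist n m (dy_u0 n m) (dy_zero m)
           = (((m + n) div 2 + 1) choose 2) + (((m - n + 1) div 2 + 1) choose 2)"
proof -
  define s where "s = (m + n) div 2"
  have s: "s \<le> m" "m - s = (m - n + 1) div 2" "\<bar>2 * - int s + int m\<bar> \<le> int n"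
    using assms unfolding s_def by presburger+
  have t0: "(- int s) mod int n = dy_u0 n m ! 0 mod int n"
  proof -
    have "- int s = - int ((m - n) div 2) - int n"
      using assms(2) unfolding s_def by presburger
    then show ?thesis
      using assms by (simp add: dy_u0_nth_0)
  qed
  have "int (dy_dist n m (dy_u0 n m) (dy_zero m)) = abs_shift_sum m (- int s)"
    using dy_dist_eq_potential[OF dy_vert_u0 t0] abs_shift_sum_min_cong[OF _ s(3)] assms(1)
    by (simp add: dy_potential_u0 t0)
  then show ?thesis
    using abs_shift_sum_eq_choose[OF s(1)] s(2) unfolding s_def by simp
qed

lemma dy_dist_u1:
  assumes "1 < n" "n < m" "odd (m - n)"
  shows "int (dy_dist n m (dy_u1 n m) (dy_zero m))
           = int (((m + n + 1) div 2 + 1) choose 2) + int (((m - n) div 2 + 1) choose 2)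
             - int (m div 2 + 1)"
proof -
  obtain s where "m - n = 2 * s + 1"
    using assms(3) by (rule oddE)
  then have m: "m = n + 2 * s + 1"
    using assms(2) by simp
  have idx: "(m + n + 1) div 2 = n + s + 1" "(m - n) div 2 = s"
    using m by simp_all
  define c where "c = m div 2"
  have c: "2 * int c \<le> int m" "int m \<le> 2 * int c + 1"
    unfolding c_def by presburger+
  have t0: "(- int (n + s)) mod int n = dy_u1 n m ! 0 mod int n"
  proof -
    have "- int n - int s = - int s - int n"
      by simp
    then have "(- int n - int s) mod int n = (- int s) mod int n"
      by (simp only: minus_mod_self2)
    then show ?thesis
      using assms(2) by (simp add: dy_u1_nth_0 m)
  qed
  have min: "dy_potential m (dy_u1 n m) (- int (n + s)) \<le> dy_potential m (dy_u1 n m) t"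
    if "t mod int n = dy_u1 n m ! 0 mod int n" for t
  proof -
    have cong: "t mod int n = (- int (n + s)) mod int n"
      using that t0 by simp
    have "abs_shift_sum (m - 1) (- int (n + s)) \<le> abs_shift_sum (m - 1) t"
      using cong by (rule abs_shift_sum_min_cong) (simp add: m)
    moreover have "\<bar>2 * - int (n + s) + 2 * int c\<bar> \<le> \<bar>2 * t + 2 * int c\<bar>"
      using cong by (rule abs_le_abs_of_cong) (use c m assms(1) in \<open>simp add: abs_le_iff; linarith\<close>)
    then have "\<bar>- int (n + s) + int c\<bar> \<le> \<bar>t + int c\<bar>"
      by arith
    ultimately show ?thesis
      using assms(2) by (simp add: dy_potential_u1 c_def)
  qed
  have "int (dy_dist n m (dy_u1 n m) (dy_zero m)) = abs_shift_sum (m - 1) (- int (n + s)) + (int (n + s) - int c)"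
    using dy_dist_eq_potential[OF dy_vert_u1 t0 min] assms c m by (simp add: dy_potential_u1 c_def)
  also have "\<dots> = int ((n + s + 1 + 1) choose 2) + int ((s + 1) choose 2) - int (c + 1)"
    using abs_shift_sum_eq_choose[of "n + s" "m - 1"] m by (simp add: numeral_2_eq_2)
  finally show ?thesis
    unfolding idx c_def .
qed

theorem lemma5p22:
  fixes n m :: nat
  assumes "1 < n" and "n \<le> m"
  shows "dy_dist n m (dy_u0 n m) (dy_zero m)
           = ((nat \<lfloor>(real m + real n) / 2\<rfloor> + 1) choose 2)
             + ((nat \<lceil>(real m - real n) / 2\<rceil> + 1) choose 2)
         \<and> (n < m \<and> odd (m - n) \<longrightarrow>
         int (dy_dist n m (dy_u1 n m) (dy_zero m))
           = int ((nat \<lceil>(real m + real n) / 2\<rceil> + 1) choose 2)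
             + int ((nat \<lfloor>(real m - real n) / 2\<rfloor> + 1) choose 2)
             - \<lceil>(real m + 1) / 2\<rceil>)"
proof -
  have "\<lfloor>(real m + real n) / 2\<rfloor> = int ((m + n) div 2)"
    "\<lceil>(real m - real n) / 2\<rceil> = int ((m - n + 1) div 2)"
    using floor_half_of_nat[of "m + n"] ceiling_half_of_nat_diff[OF assms(2)] by simp_all
  then have "dy_dist n m (dy_u0 n m) (dy_zero m)
           = ((nat \<lfloor>(real m + real n) / 2\<rfloor> + 1) choose 2)
             + ((nat \<lceil>(real m - real n) / 2\<rceil> + 1) choose 2)"
    using dy_dist_u0[OF assms] by simp
  moreover have "int (dy_dist n m (dy_u1 n m) (dy_zero m))
           = int ((nat \<lceil>(real m + real n) / 2\<rceil> + 1) choose 2)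
             + int ((nat \<lfloor>(real m - real n) / 2\<rfloor> + 1) choose 2)
             - \<lceil>(real m + 1) / 2\<rceil>" if "n < m" "odd (m - n)"
  proof -
    have "\<lceil>(real m + real n) / 2\<rceil> = int ((m + n + 1) div 2)"
      "\<lfloor>(real m - real n) / 2\<rfloor> = int ((m - n) div 2)"
      "\<lceil>(real m + 1) / 2\<rceil> = int (m div 2 + 1)"
      using ceiling_half_of_nat[of "m + n"] floor_half_of_nat_diff[OF assms(2)] dy_u1_centre[of m]
      by simp_all
    then show ?thesis
      using dy_dist_u1[OF assms(1) that] by simp
  qed
  ultimately show ?thesis
    by blast
qed

end
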